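(* The second-order ordinary differential equation $$(\chi+\psi)^{2}\frac{d^{2}\psi}{d\chi^{2}}+(\chi+\psi)\left(\frac{d\psi}{d\chi}-2(2+\chi)\right)\frac{d\psi}{d\chi}+(6+4\chi+3\psi)\psi=0$$ for $\psi=\psi(\chi)$ admits no (nontrivial) Lie point symmetries.
   Context: This equation is the reduction of the Chazy equation $y'''-2yy''+3(y')^2=0$ by the invariants $\chi=xy$, $\psi=x^2y'$ of the scaling symmetry $x\partial_x-y\partial_y$. *)

theory Defs
  imports "HOL-Analysis.Analysis"
begin

definition px :: "(real \<times> real \<Rightarrow> real) \<Rightarrow> real \<times> real \<Rightarrow> real" where
  "px f = (\<lambda>(x, y). deriv (\<lambda>t. f (t, y)) x)"
definition py :: "(real \<times> real \<Rightarrow> real) \<Rightarrow> real \<times> real \<Rightarrow> real" where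
  "py f = (\<lambda>(x, y). deriv (\<lambda>t. f (x, t)) y)"

text \<open>C-infinity on an open set U: (Frechet) differentiable on U, and all partial
  derivatives are again C-infinity on U (greatest fixed point).\<close>
coinductive smooth2 :: "(real \<times> real) set \<Rightarrow> (real \<times> real \<Rightarrow> real) \<Rightarrow> bool" for U where
  "\<lbrakk> f differentiable_on U; smooth2 U (px f); smooth2 U (py f) \<rbrakk> \<Longrightarrow> smooth2 U f"

text \<open>The ODE F(x, y, y', y'') = 0 with x = chi, y = psi, p = y', q = y''.\<close>
definition odeF :: "real \<Rightarrow> real \<Rightarrow> real \<Rightarrow> real \<Rightarrow> real" where
  "odeF x y p q = (x + y)^2 * q + (x + y) * (p - 2 * (2 + x)) * p + (6 + 4 * x + 3 * y) * y"

text \<open>Prolongation coefficients of X = xi d/dx + eta d/dy.\<close>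
definition eta1 :: "(real \<times> real \<Rightarrow> real) \<Rightarrow> (real \<times> real \<Rightarrow> real) \<Rightarrow> real \<Rightarrow> real \<Rightarrow> real \<Rightarrow> real" where
  "eta1 xi eta x y p =
     px eta (x, y) + (py eta (x, y) - px xi (x, y)) * p - py xi (x, y) * p^2"

definition eta2 :: "(real \<times> real \<Rightarrow> real) \<Rightarrow> (real \<times> real \<Rightarrow> real) \<Rightarrow> real \<Rightarrow> real \<Rightarrow> real \<Rightarrow> real \<Rightarrow> real" where
  "eta2 xi eta x y p q =
     px (px eta) (x, y) + (2 * py (px eta) (x, y) - px (px xi) (x, y)) * p
     + (py (py eta) (x, y) - 2 * py (px xi) (x, y)) * p^2 - py (py xi) (x, y) * p^3
     + (py eta (x, y) - 2 * px xi (x, y) - 3 * py xi (x, y) * p) * q"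

definition prolongF :: "(real \<times> real \<Rightarrow> real) \<Rightarrow> (real \<times> real \<Rightarrow> real) \<Rightarrow> real \<Rightarrow> real \<Rightarrow> real \<Rightarrow> real \<Rightarrow> real" where
  "prolongF xi eta x y p q =
       xi (x, y) * deriv (\<lambda>t. odeF t y p q) x
     + eta (x, y) * deriv (\<lambda>t. odeF x t p q) y
     + eta1 xi eta x y p * deriv (\<lambda>t. odeF x y t q) p
     + eta2 xi eta x y p q * deriv (\<lambda>t. odeF x y p t) q"

text \<open>X = xi d/dx + eta d/dy (smooth on an open set U of the region where the
  equation is a genuine second-order ODE, x + y \<noteq> 0) is a Lie point symmetry
  iff its second prolongation annihilates F on the solution manifold F = 0.\<close>
definition lie_point_symmetry :: "(real \<times> real) set \<Rightarrow> (real \<times> real \<Rightarrow> real) \<Rightarrow> (real \<times> real \<Rightarrow> real) \<Rightarrow> bool" where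
  "lie_point_symmetry U xi eta \<longleftrightarrow>
     open U \<and> U \<subseteq> {(x, y). x + y \<noteq> 0} \<and> smooth2 U xi \<and> smooth2 U eta \<and>
     (\<forall>x y p q. (x, y) \<in> U \<longrightarrow> odeF x y p q = 0 \<longrightarrow> prolongF xi eta x y p q = 0)"

end

theory Submission
  imports Defs "HOL-Computational_Algebra.Polynomial"
begin

(* Write u = x + y. Eliminating y'' with the equation turns the prolonged symmetry condition into
   a cubic in y' whose four coefficients must vanish. The two leading ones integrate in y to
   xi = c(x) u^2/2 + e(x) and, through an Euler equation u^2 W'' + u W' - W = 0 in y, to
   eta = g(x)/u - e(x) + u f(x) + (7/2 + 4x/3) u^2 c(x) + u^3 c'(x)/4. Multiplied by u, the two
   remaining coefficients become polynomials in u with coefficients built from c, e, f, g and their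
   x-derivatives; vanishing on an interval of u, all these coefficients are 0, which forces
   c = e = g = 0 and then f = e' = 0. The argument is local, on a box around an arbitrary point of U
   where u stays away from 0. *)

section \<open>Smooth functions of two variables\<close>

lemma smooth2_unfold:
  "smooth2 U f \<Longrightarrow> f differentiable_on U \<and> smooth2 U (px f) \<and> smooth2 U (py f)"
  by (erule smooth2.cases) auto

lemma smooth2_py: "smooth2 U f \<Longrightarrow> smooth2 U (py f)"
  using smooth2_unfold by blast

lemma has_real_derivative_px:
  assumes "smooth2 U f" "open U" "(x, y) \<in> U"
  shows "((\<lambda>t. f (t, y)) has_real_derivative px f (x, y)) (at x)"
proof -
  have "f differentiable at (x, y)"
    using assms smooth2_unfold differentiable_on_eq_differentiable_at by blast
  then have "(f \<circ> (\<lambda>t. (t, y))) differentiable at x"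
    by (intro differentiable_chain_at) (auto intro!: derivative_intros simp: differentiable_def)
  then show ?thesis
    unfolding px_def by (simp add: o_def DERIV_deriv_iff_real_differentiable)
qed

lemma has_real_derivative_py:
  assumes "smooth2 U f" "open U" "(x, y) \<in> U"
  shows "((\<lambda>t. f (x, t)) has_real_derivative py f (x, y)) (at y)"
proof -
  have "f differentiable at (x, y)"
    using assms smooth2_unfold differentiable_on_eq_differentiable_at by blast
  then have "(f \<circ> (\<lambda>t. (x, t))) differentiable at y"
    by (intro differentiable_chain_at) (auto intro!: derivative_intros simp: differentiable_def)
  then show ?thesis
    unfolding py_def by (simp add: o_def DERIV_deriv_iff_real_differentiable)
qed

section \<open>Smooth functions of one variable\<close>

coinductive smooth1 :: "real set \<Rightarrow> (real \<Rightarrow> real) \<Rightarrow> bool" for I where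
  "(\<And>t. t \<in> I \<Longrightarrow> (g has_real_derivative g' t) (at t)) \<Longrightarrow> smooth1 I g' \<Longrightarrow> smooth1 I g"

lemma smooth1_unfold:
  "smooth1 I g \<Longrightarrow> \<exists>g'. (\<forall>t\<in>I. (g has_real_derivative g' t) (at t)) \<and> smooth1 I g'"
  by (erule smooth1.cases) auto

text \<open>The derivative of a product is not a product, so closure of smooth1 under
  multiplication is proved by coinduction up to the following algebraic closure.\<close>

inductive smooth1_closure :: "real set \<Rightarrow> (real \<Rightarrow> real) \<Rightarrow> bool" for I where
  leaf: "smooth1 I g \<Longrightarrow> smooth1_closure I g"
| const: "smooth1_closure I (\<lambda>_. k)"
| ident: "smooth1_closure I (\<lambda>t. t)"
| add: "smooth1_closure I f \<Longrightarrow> smooth1_closure I g \<Longrightarrow> smooth1_closure I (\<lambda>t. f t + g t)"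
| mult: "smooth1_closure I f \<Longrightarrow> smooth1_closure I g \<Longrightarrow> smooth1_closure I (\<lambda>t. f t * g t)"
| inverse: "smooth1_closure I g \<Longrightarrow> (\<And>t. t \<in> I \<Longrightarrow> g t \<noteq> 0) \<Longrightarrow>
    smooth1_closure I (\<lambda>t. inverse (g t))"

lemma smooth1_closure_unfold:
  "smooth1_closure I g \<Longrightarrow>
    \<exists>g'. (\<forall>t\<in>I. (g has_real_derivative g' t) (at t)) \<and> smooth1_closure I g'"
proof (induction rule: smooth1_closure.induct)
  case (leaf g)
  then show ?case using smooth1_unfold smooth1_closure.leaf by blast
next
  case (const k)
  show ?case by (intro exI[of _ "\<lambda>_. 0"]) (auto intro: smooth1_closure.const)
next
  case ident
  show ?case by (intro exI[of _ "\<lambda>_. 1"]) (auto intro: smooth1_closure.const)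
next
  case (add f g)
  then obtain f' g' where "\<forall>t\<in>I. (f has_real_derivative f' t) (at t)" "smooth1_closure I f'"
    "\<forall>t\<in>I. (g has_real_derivative g' t) (at t)" "smooth1_closure I g'" by blast
  then show ?case
    by (intro exI[of _ "\<lambda>t. f' t + g' t"]) (auto intro!: derivative_eq_intros smooth1_closure.add)
next
  case (mult f g)
  then obtain f' g' where "\<forall>t\<in>I. (f has_real_derivative f' t) (at t)" "smooth1_closure I f'"
    "\<forall>t\<in>I. (g has_real_derivative g' t) (at t)" "smooth1_closure I g'" by blast
  then show ?case using mult
    by (intro exI[of _ "\<lambda>t. f' t * g t + f t * g' t"])
      (auto intro!: derivative_eq_intros smooth1_closure.add smooth1_closure.mult)
next
  case (inverse g)
  then obtain g' where g': "\<forall>t\<in>I. (g has_real_derivative g' t) (at t)" "smooth1_closure I g'"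
    by blast
  let ?h = "\<lambda>t. (\<lambda>_. -1) t * g' t * (inverse (g t) * inverse (g t))"
  have "\<forall>t\<in>I. ((\<lambda>t. inverse (g t)) has_real_derivative ?h t) (at t)"
    using g' inverse.hyps(2) by (auto intro!: derivative_eq_intros simp: algebra_simps)
  moreover have "smooth1_closure I ?h"
    using g' inverse by (intro smooth1_closure.mult smooth1_closure.const smooth1_closure.inverse)
  ultimately show ?case by (intro exI[of _ ?h] conjI)
qed

lemma smooth1_closure_imp_smooth1: "smooth1_closure I g \<Longrightarrow> smooth1 I g"
proof (coinduction arbitrary: g)
  case smooth1
  then show ?case using smooth1_closure_unfold by blast
qed

lemma smooth1_const: "smooth1 I (\<lambda>_. k)"
  by (rule smooth1_closure_imp_smooth1, rule smooth1_closure.const)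

lemma smooth1_ident: "smooth1 I (\<lambda>t. t)"
  by (rule smooth1_closure_imp_smooth1, rule smooth1_closure.ident)

lemma smooth1_add: "smooth1 I f \<Longrightarrow> smooth1 I g \<Longrightarrow> smooth1 I (\<lambda>t. f t + g t)"
  by (rule smooth1_closure_imp_smooth1, rule smooth1_closure.add; rule smooth1_closure.leaf)

lemma smooth1_mult: "smooth1 I f \<Longrightarrow> smooth1 I g \<Longrightarrow> smooth1 I (\<lambda>t. f t * g t)"
  by (rule smooth1_closure_imp_smooth1, rule smooth1_closure.mult; rule smooth1_closure.leaf)

lemma smooth1_inverse:
  "smooth1 I g \<Longrightarrow> (\<And>t. t \<in> I \<Longrightarrow> g t \<noteq> 0) \<Longrightarrow> smooth1 I (\<lambda>t. inverse (g t))"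
  by (rule smooth1_closure_imp_smooth1, rule smooth1_closure.inverse, rule smooth1_closure.leaf)

lemma smooth1_diff: "smooth1 I f \<Longrightarrow> smooth1 I g \<Longrightarrow> smooth1 I (\<lambda>t. f t - g t)"
  using smooth1_add[of I f "\<lambda>t. -1 * g t"] smooth1_mult[of I "\<lambda>_. -1" g] smooth1_const
  by simp

lemma smooth1_divide:
  "smooth1 I f \<Longrightarrow> smooth1 I g \<Longrightarrow> (\<And>t. t \<in> I \<Longrightarrow> g t \<noteq> 0) \<Longrightarrow>
    smooth1 I (\<lambda>t. f t / g t)"
  unfolding divide_inverse by (intro smooth1_mult smooth1_inverse)

lemma smooth1_power: "smooth1 I f \<Longrightarrow> smooth1 I (\<lambda>t. f t ^ n)"
  by (induction n) (auto intro: smooth1_const smooth1_mult)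

lemmas smooth1_intros =
  smooth1_const smooth1_ident smooth1_add smooth1_diff smooth1_mult smooth1_divide smooth1_power

lemma smooth1_cong:
  assumes "open I" "smooth1 I g" "\<And>t. t \<in> I \<Longrightarrow> h t = g t"
  shows "smooth1 I h"
  using assms(2,3)
proof (coinduction arbitrary: g h)
  case smooth1
  then obtain g' where g': "\<forall>t\<in>I. (g has_real_derivative g' t) (at t)" "smooth1 I g'"
    using smooth1_unfold by blast
  have "(h has_real_derivative g' t) (at t)" if "t \<in> I" for t
    using has_field_derivative_transform_within_open[OF _ assms(1) that] g'(1) that smooth1(2)
    by (metis (no_types, lifting))
  then show ?case using g'(2) by blast
qed

lemma smooth1_has_real_derivative:
  assumes "smooth1 I g" "t \<in> I"
  shows "(g has_real_derivative deriv g t) (at t)"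
proof -
  obtain g' where "\<forall>t\<in>I. (g has_real_derivative g' t) (at t)"
    using smooth1_unfold[OF assms(1)] by blast
  with assms(2) have "(g has_real_derivative g' t) (at t)" by blast
  then show ?thesis by (simp add: DERIV_imp_deriv)
qed

lemma smooth1_deriv:
  assumes "open I" "smooth1 I g"
  shows "smooth1 I (deriv g)"
proof -
  obtain g' where g': "\<forall>t\<in>I. (g has_real_derivative g' t) (at t)" "smooth1 I g'"
    using smooth1_unfold[OF assms(2)] by blast
  show ?thesis
  proof (rule smooth1_cong[OF assms(1) g'(2)])
    fix t assume "t \<in> I"
    with g'(1) show "deriv g t = g' t" by (simp add: DERIV_imp_deriv)
  qed
qed

lemma smooth1_restrict:
  assumes "smooth2 U F" "open U" "\<And>t. t \<in> I \<Longrightarrow> (t, y) \<in> U"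
  shows "smooth1 I (\<lambda>t. F (t, y))"
  using assms(1)
proof (coinduction arbitrary: F)
  case smooth1
  have "\<forall>t\<in>I. ((\<lambda>t. F (t, y)) has_real_derivative px F (t, y)) (at t)"
    using has_real_derivative_px[OF smooth1 assms(2,3)] by blast
  moreover have "smooth2 U (px F)" using smooth2_unfold[OF smooth1] by blast
  ultimately show ?case
    by (intro exI[of _ "\<lambda>t. F (t, y)"] exI[of _ "\<lambda>t. px F (t, y)"]) auto
qed

lemma cubic_eq_0_imp_coeffs_eq_0:
  fixes a b c d :: real
  assumes "\<And>p. a + b * p + c * p^2 + d * p^3 = 0"
  shows "a = 0" "b = 0" "c = 0" "d = 0"
  using assms[of 0] assms[of 1] assms[of "-1"] assms[of 2] by simp_all

lemma poly_eq_0_if_vanishes_on_interval: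
  fixes p :: "real poly"
  assumes "a < b" "\<And>s. s \<in> {a<..<b} \<Longrightarrow> poly p s = 0"
  shows "p = 0"
proof (rule ccontr)
  assume "p \<noteq> 0"
  then have "finite {s. poly p s = 0}" by (rule poly_roots_finite)
  moreover have "{a<..<b} \<subseteq> {s. poly p s = 0}" using assms(2) by auto
  ultimately show False using infinite_Ioo[OF assms(1)] finite_subset by blast
qed

lemma euler_equation_solution:
  fixes W W' W'' :: "real \<Rightarrow> real"
  assumes \<tau>: "\<tau> \<in> {\<alpha><..<\<beta>}" and t: "t \<in> {\<alpha><..<\<beta>}"
    and nonzero: "\<And>s. s \<in> {\<alpha><..<\<beta>} \<Longrightarrow> a + s \<noteq> 0"
    and W: "\<And>s. s \<in> {\<alpha><..<\<beta>} \<Longrightarrow> (W has_real_derivative W' s) (at s)"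
    and W': "\<And>s. s \<in> {\<alpha><..<\<beta>} \<Longrightarrow> (W' has_real_derivative W'' s) (at s)"
    and euler: "\<And>s. s \<in> {\<alpha><..<\<beta>} \<Longrightarrow> (a + s)^2 * W'' s + (a + s) * W' s - W s = 0"
  shows "W t = (W \<tau> + (a + \<tau>) * W' \<tau>) / (2 * (a + \<tau>)) * (a + t)
      + ((a + \<tau>) * W \<tau> - (a + \<tau>)^2 * W' \<tau>) / 2 / (a + t)"
proof -
  define B where "B = ((a + \<tau>) * W \<tau> - (a + \<tau>)^2 * W' \<tau>) / 2"
  have ab: "\<alpha> < \<beta>" using \<tau> by simp
  have wronskian: "(a + s) * W s - (a + s)^2 * W' s = 2 * B" if s: "s \<in> {\<alpha><..<\<beta>}" for s
  proof -
    let ?L = "\<lambda>s. (a + s) * W s - (a + s)^2 * W' s"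
    have "(?L has_real_derivative 0) (at r)" if r: "r \<in> {\<alpha><..<\<beta>}" for r
    proof -
      have "(?L has_real_derivative - ((a + r)^2 * W'' r + (a + r) * W' r - W r)) (at r)"
        using W[OF r] W'[OF r]
        by (auto intro!: derivative_eq_intros simp: algebra_simps power2_eq_square)
      then show ?thesis using euler[OF r] by simp
    qed
    then have "?L s = ?L \<tau>" using DERIV_isconst3[OF ab s \<tau>] by blast
    then show ?thesis unfolding B_def by simp
  qed
  let ?O = "\<lambda>s. W s / (a + s) - B / ((a + s) * (a + s))"
  have "(?O has_real_derivative 0) (at r)" if r: "r \<in> {\<alpha><..<\<beta>}" for r
  proof -
    have nz: "a + r \<noteq> 0" using nonzero[OF r] .
    have "(?O has_real_derivative
        ((a + r) * (a + r) * W' r - (a + r) * W r + 2 * B) / ((a + r) * (a + r) * (a + r))) (at r)"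
      using W[OF r] nz
      by (auto intro!: derivative_eq_intros) (simp add: divide_simps, simp add: algebra_simps)
    moreover have "(a + r) * (a + r) * W' r - (a + r) * W r + 2 * B = 0"
      using wronskian[OF r] by (simp add: power2_eq_square)
    ultimately show ?thesis by simp
  qed
  then have "?O t = ?O \<tau>" using DERIV_isconst3[OF ab t \<tau>] by blast
  moreover have "W0 / u0 - (u0 * W0 - u0^2 * W0') / 2 / (u0 * u0) = (W0 + u0 * W0') / (2 * u0)"
    if "u0 \<noteq> 0" for u0 W0 W0' :: real
    using that by (simp add: field_simps power2_eq_square)
  then have "?O \<tau> = (W \<tau> + (a + \<tau>) * W' \<tau>) / (2 * (a + \<tau>))"
    using nonzero[OF \<tau>] unfolding B_def by blast
  moreover have "Wt = A * u + B / u" if "u \<noteq> 0" "Wt / u - B / (u * u) = A" for u Wt A :: real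
    using that by (simp add: field_simps)
  ultimately show ?thesis
    using nonzero[OF t] unfolding B_def[symmetric] by metis
qed

lemma box_subset_ball:
  fixes a b r :: real
  shows "{a - r/2<..<a + r/2} \<times> {b - r/2<..<b + r/2} \<subseteq> ball (a, b) r"
proof clarify
  fix x y assume "x \<in> {a - r/2<..<a + r/2}" "y \<in> {b - r/2<..<b + r/2}"
  then have "dist a x < r/2" "dist b y < r/2" unfolding dist_real_def abs_less_iff by auto
  then have "dist (a, b) (x, y) < r"
    using dist_Pair_Pair[of a b x y] sqrt_sum_squares_le_sum_abs[of "dist a x" "dist b y"] by simp
  then show "(x, y) \<in> ball (a, b) r" by simp
qed

section \<open>Determining equations\<close>

lemma deriv_odeF:
  "deriv (\<lambda>t. odeF t y p q) x = 2*(x+y)*q + (p-2*(2+x))*p - 2*(x+y)*p + 4*y"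
  "deriv (\<lambda>t. odeF x t p q) y = 2*(x+y)*q + (p-2*(2+x))*p + 6 + 4*x + 6*y"
  "deriv (\<lambda>t. odeF x y t q) p = (x+y)*(2*p - 2*(2+x))"
  "deriv (\<lambda>t. odeF x y p t) q = (x+y)^2"
  unfolding odeF_def
  by (rule DERIV_imp_deriv; auto intro!: derivative_eq_intros simp: algebra_simps power2_eq_square)+

lemma lie_point_symmetry_determining_equations:
  assumes sym: "lie_point_symmetry U xi eta" and xy: "(x, y) \<in> U"
  defines "u \<equiv> x + y"
  defines "X0 \<equiv> xi (x, y)" and "X1 \<equiv> px xi (x, y)" and "X2 \<equiv> py xi (x, y)"
    and "Xxx \<equiv> px (px xi) (x, y)" and "Xxy \<equiv> py (px xi) (x, y)" and "Xyy \<equiv> py (py xi) (x, y)"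
  defines "N0 \<equiv> eta (x, y)" and "N1 \<equiv> px eta (x, y)" and "N2 \<equiv> py eta (x, y)"
    and "Nxx \<equiv> px (px eta) (x, y)" and "Nxy \<equiv> py (px eta) (x, y)" and "Nyy \<equiv> py (py eta) (x, y)"
  shows "X2 - u*Xyy = 0"
    and "- X0 - N0 + u*N2 - 2*u*(4+2*x)*X2 + u^2*(Nyy - 2*Xxy) = 0"
    and "X0*((4+2*x) - 2*u) + (4+2*x)*N0 + 2*u*N1 - u*(4+2*x)*X1 + u^2*(2*Nxy - Xxx)
      + 3*(6+4*x+3*y)*y*X2 = 0"
    and "X0*(4*y*u - 2*(6+4*x+3*y)*y) + N0*(((6+4*x+3*y) + 3*y)*u - 2*(6+4*x+3*y)*y)
      - u^2*(4+2*x)*N1 + u^3*Nxx - (6+4*x+3*y)*y*u*N2 + 2*(6+4*x+3*y)*y*u*X1 = 0"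
proof -
  let ?E3 = "X2 - u*Xyy"
  let ?E2 = "- X0 - N0 + u*N2 - 2*u*(4+2*x)*X2 + u^2*(Nyy - 2*Xxy)"
  let ?E1 = "X0*((4+2*x) - 2*u) + (4+2*x)*N0 + 2*u*N1 - u*(4+2*x)*X1 + u^2*(2*Nxy - Xxx)
      + 3*(6+4*x+3*y)*y*X2"
  let ?E0 = "X0*(4*y*u - 2*(6+4*x+3*y)*y) + N0*(((6+4*x+3*y) + 3*y)*u - 2*(6+4*x+3*y)*y)
      - u^2*(4+2*x)*N1 + u^3*Nxx - (6+4*x+3*y)*y*u*N2 + 2*(6+4*x+3*y)*y*u*X1"
  have u: "u \<noteq> 0" using sym xy unfolding lie_point_symmetry_def u_def by auto
  have "?E0 + (u*?E1)*p + (u*?E2)*p^2 + (u^2*?E3)*p^3 = 0" for p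
  proof -
    define q where "q = -(u*(p - 2*(2+x))*p + (6+4*x+3*y)*y) / u^2"
    have q: "u^2 * q = -(u*(p - 2*(2+x))*p + (6+4*x+3*y)*y)" unfolding q_def using u by simp
    have "odeF x y p q = 0" unfolding odeF_def u_def[symmetric] using q
      by (simp add: algebra_simps power2_eq_square)
    then have "prolongF xi eta x y p q = 0" using sym xy unfolding lie_point_symmetry_def by blast
    moreover have "u^2 * prolongF xi eta x y p q = u * (?E0 + u*?E1*p + u*?E2*p^2 + u^2*?E3*p^3)"
      unfolding prolongF_def deriv_odeF eta1_def eta2_def
      unfolding X0_def[symmetric] X1_def[symmetric] X2_def[symmetric] Xxx_def[symmetric]
        Xxy_def[symmetric] Xyy_def[symmetric] N0_def[symmetric] N1_def[symmetric] N2_def[symmetric]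
        Nxx_def[symmetric] Nxy_def[symmetric] Nyy_def[symmetric]
      using q unfolding u_def by algebra
    ultimately show ?thesis using u by simp
  qed
  from cubic_eq_0_imp_coeffs_eq_0[OF this] u
  show "?E3 = 0" "?E2 = 0" "?E1 = 0" "?E0 = 0" by simp_all
qed

section \<open>Integrating the determining equations on a box\<close>

locale symmetry_on_box =
  fixes U :: "(real \<times> real) set" and xi eta :: "real \<times> real \<Rightarrow> real" and x0 y0 d :: real
  assumes symmetry: "lie_point_symmetry U xi eta"
    and d_pos: "0 < d"
    and box_subset: "{x0 - d<..<x0 + d} \<times> {y0 - d<..<y0 + d} \<subseteq> U"
begin

definition I :: "real set" where "I = {x0 - d<..<x0 + d}"
definition J :: "real set" where "J = {y0 - d<..<y0 + d}"

lemma open_U: "open U" and smooth_xi: "smooth2 U xi" and smooth_eta: "smooth2 U eta"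
  using symmetry unfolding lie_point_symmetry_def by auto

lemma open_I: "open I" and open_J: "open J" and x0_in_I: "x0 \<in> I" and y0_in_J: "y0 \<in> J"
  unfolding I_def J_def using d_pos by auto

lemma box_in_U: "x \<in> I \<Longrightarrow> t \<in> J \<Longrightarrow> (x, t) \<in> U"
  using box_subset unfolding I_def J_def by blast

lemma sum_nonzero: "x \<in> I \<Longrightarrow> t \<in> J \<Longrightarrow> x + t \<noteq> 0"
  using symmetry box_in_U unfolding lie_point_symmetry_def by blast

lemma constant_on_J:
  "t \<in> J \<Longrightarrow> (\<And>s. s \<in> J \<Longrightarrow> (\<phi> has_real_derivative 0) (at s)) \<Longrightarrow> \<phi> t = \<phi> y0"
  using DERIV_isconst3[of "y0 - d" "y0 + d" t y0 \<phi>] d_pos unfolding J_def by auto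

lemma px_eqI:
  assumes "x \<in> I" "\<And>s. s \<in> I \<Longrightarrow> F (s, t) = h s" "(h has_real_derivative D) (at x)"
  shows "px F (x, t) = D"
proof -
  have "((\<lambda>s. F (s, t)) has_real_derivative D) (at x)"
    using has_field_derivative_transform_within_open[OF assms(3) open_I assms(1)] assms(2) by metis
  then show ?thesis unfolding px_def by (simp add: DERIV_imp_deriv)
qed

lemma py_eqI:
  assumes "t \<in> J" "\<And>s. s \<in> J \<Longrightarrow> F (x, s) = h s" "(h has_real_derivative D) (at t)"
  shows "py F (x, t) = D"
proof -
  have "((\<lambda>s. F (x, s)) has_real_derivative D) (at t)"
    using has_field_derivative_transform_within_open[OF assms(3) open_J assms(1)] assms(2) by metis
  then show ?thesis unfolding py_def by (simp add: DERIV_imp_deriv)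
qed

lemma smooth1_derivatives:
  assumes "smooth1 I g" "x \<in> I"
  shows "(g has_real_derivative deriv g x) (at x)"
    and "(deriv g has_real_derivative deriv (deriv g) x) (at x)"
    and "(deriv (deriv g) has_real_derivative deriv (deriv (deriv g)) x) (at x)"
  using assms smooth1_has_real_derivative smooth1_deriv[OF open_I] by blast+

lemma py_derivative:
  "smooth2 U F \<Longrightarrow> x \<in> I \<Longrightarrow> t \<in> J \<Longrightarrow>
    ((\<lambda>s. F (x, s)) has_real_derivative py F (x, t)) (at t)"
  using has_real_derivative_py open_U box_in_U by blast

lemma smooth1_on_base_line: "smooth2 U F \<Longrightarrow> smooth1 I (\<lambda>x. F (x, y0))"
  using smooth1_restrict open_U box_in_U y0_in_J by blast

lemmas determining = lie_point_symmetry_determining_equations[OF symmetry box_in_U]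

definition c :: "real \<Rightarrow> real" where "c x = py xi (x, y0) / (x + y0)"

lemma py_xi: "x \<in> I \<Longrightarrow> t \<in> J \<Longrightarrow> py xi (x, t) = c x * (x + t)"
proof -
  assume x: "x \<in> I" and t: "t \<in> J"
  let ?\<phi> = "\<lambda>s. py xi (x, s) / (x + s)"
  have "(?\<phi> has_real_derivative 0) (at s)" if s: "s \<in> J" for s
  proof -
    have "(?\<phi> has_real_derivative
        (py (py xi) (x, s) * (x + s) - py xi (x, s)) / ((x + s) * (x + s))) (at s)"
      using py_derivative[OF smooth2_py[OF smooth_xi] x s] sum_nonzero[OF x s]
      by (auto intro!: derivative_eq_intros)
    then show ?thesis using determining(1)[OF x s] by (simp add: algebra_simps)
  qed
  then have "?\<phi> t = ?\<phi> y0" using constant_on_J[OF t] by blast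
  then show ?thesis unfolding c_def using sum_nonzero[OF x t] by (simp add: field_simps)
qed

definition e :: "real \<Rightarrow> real" where "e x = xi (x, y0) - c x * (x + y0)^2 / 2"

lemma xi_eq: "x \<in> I \<Longrightarrow> t \<in> J \<Longrightarrow> xi (x, t) = c x * (x + t)^2 / 2 + e x"
proof -
  assume x: "x \<in> I" and t: "t \<in> J"
  let ?\<phi> = "\<lambda>s. xi (x, s) - c x * (x + s)^2 / 2"
  have "(?\<phi> has_real_derivative 0) (at s)" if s: "s \<in> J" for s
  proof -
    have "(?\<phi> has_real_derivative py xi (x, s) - c x * (x + s)) (at s)"
      using py_derivative[OF smooth_xi x s] by (auto intro!: derivative_eq_intros)
    then show ?thesis using py_xi[OF x s] by simp
  qed
  then have "?\<phi> t = ?\<phi> y0" using constant_on_J[OF t] by blast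
  then show ?thesis unfolding e_def by simp
qed

lemma smooth1_c: "smooth1 I c"
  unfolding c_def using sum_nonzero y0_in_J
  by (intro smooth1_intros smooth1_on_base_line smooth2_py smooth_xi) auto

lemma smooth1_e: "smooth1 I e"
  unfolding e_def by (intro smooth1_intros smooth1_on_base_line smooth1_c smooth_xi) simp_all

abbreviation "c' \<equiv> deriv c"
abbreviation "c'' \<equiv> deriv c'"
abbreviation "c''' \<equiv> deriv c''"
abbreviation "e' \<equiv> deriv e"
abbreviation "e'' \<equiv> deriv e'"

lemmas c_derivatives = smooth1_derivatives[OF smooth1_c]
lemmas e_derivatives = smooth1_derivatives[OF smooth1_e]

lemma px_xi:
  "x \<in> I \<Longrightarrow> t \<in> J \<Longrightarrow> px xi (x, t) = e' x + (x + t) * c x + (x + t)^2 * c' x / 2"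
  by (rule px_eqI[where h = "\<lambda>s. c s * (s + t)^2 / 2 + e s"])
    (auto simp: xi_eq intro!: derivative_eq_intros c_derivatives e_derivatives
      simp: algebra_simps power2_eq_square)

lemma pxpy_xi: "x \<in> I \<Longrightarrow> t \<in> J \<Longrightarrow> py (px xi) (x, t) = c x + (x + t) * c' x"
  by (rule py_eqI[where h = "\<lambda>s. e' x + (x + s) * c x + (x + s)^2 * c' x / 2"])
    (auto simp: px_xi intro!: derivative_eq_intros simp: algebra_simps power2_eq_square)

lemma pxpx_xi: "x \<in> I \<Longrightarrow> t \<in> J \<Longrightarrow>
    px (px xi) (x, t) = e'' x + c x + 2 * (x + t) * c' x + (x + t)^2 * c'' x / 2"
  by (rule px_eqI[where h = "\<lambda>s. e' s + (s + t) * c s + (s + t)^2 * c' s / 2"])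
    (auto simp: px_xi intro!: derivative_eq_intros c_derivatives e_derivatives
      simp: algebra_simps power2_eq_square)

text \<open>W is eta minus a particular solution of the second determining equation, which is
  an inhomogeneous Euler equation in y.\<close>

definition W :: "real \<Rightarrow> real \<Rightarrow> real" where
  "W x t = eta (x, t) + e x - (x + t)^2 * (21/2 + 4*x) * c x / 3 - c' x * (x + t)^3 / 4"

definition W_t :: "real \<Rightarrow> real \<Rightarrow> real" where
  "W_t x t = py eta (x, t) - 2 * (x + t) * (21/2 + 4*x) * c x / 3 - 3 * c' x * (x + t)^2 / 4"

lemma W_euler_equation:
  assumes x: "x \<in> I" and t: "t \<in> J"
  shows "(x + t)^2 * (py (py eta) (x, t) - 2 * (21/2 + 4*x) * c x / 3 - 3 * c' x * (x + t) / 2)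
    + (x + t) * W_t x t - W x t = 0"
proof -
  have "- (c x * (x + t)^2 / 2 + e x) - eta (x, t) + (x + t) * py eta (x, t)
      - 2 * (x + t) * (4 + 2*x) * (c x * (x + t))
      + (x + t)^2 * (py (py eta) (x, t) - 2 * (c x + (x + t) * c' x)) = 0"
    using determining(2)[OF x t] by (simp add: xi_eq py_xi pxpy_xi x t)
  then show ?thesis unfolding W_def W_t_def by algebra
qed

definition f :: "real \<Rightarrow> real" where
  "f x = (W x y0 + (x + y0) * W_t x y0) / (2 * (x + y0))"

definition g :: "real \<Rightarrow> real" where
  "g x = ((x + y0) * W x y0 - (x + y0)^2 * W_t x y0) / 2"

lemma W_eq:
  assumes x: "x \<in> I" and t: "t \<in> J"
  shows "W x t = f x * (x + t) + g x / (x + t)"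
  unfolding f_def g_def
proof (rule euler_equation_solution[where \<tau> = y0 and \<alpha> = "y0 - d" and \<beta> = "y0 + d"
      and a = x and W = "W x" and W' = "W_t x"
      and W'' = "\<lambda>s. py (py eta) (x, s) - 2 * (21/2 + 4*x) * c x / 3 - 3 * c' x * (x + s) / 2"])
  fix s assume "s \<in> {y0 - d<..<y0 + d}"
  then have s: "s \<in> J" unfolding J_def .
  show "x + s \<noteq> 0" using sum_nonzero[OF x s] .
  show "((W x) has_real_derivative W_t x s) (at s)"
    unfolding W_def[abs_def] W_t_def using py_derivative[OF smooth_eta x s]
    by (auto intro!: derivative_eq_intros simp: field_simps power2_eq_square power3_eq_cube)
  show "((W_t x) has_real_derivative
      py (py eta) (x, s) - 2 * (21/2 + 4*x) * c x / 3 - 3 * c' x * (x + s) / 2) (at s)"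
    unfolding W_t_def[abs_def] using py_derivative[OF smooth2_py[OF smooth_eta] x s]
    by (auto intro!: derivative_eq_intros simp: field_simps power2_eq_square)
  show "(x + s)^2 * (py (py eta) (x, s) - 2 * (21/2 + 4*x) * c x / 3 - 3 * c' x * (x + s) / 2)
      + (x + s) * W_t x s - W x s = 0"
    using W_euler_equation[OF x s] .
qed (use y0_in_J t J_def in auto)

lemma eta_eq: "x \<in> I \<Longrightarrow> t \<in> J \<Longrightarrow>
    eta (x, t) = inverse (x + t) * g x - e x + (x + t) * f x
    + 7/2 * (x + t)^2 * c x + 1/4 * (x + t)^3 * c' x + 4/3 * x * (x + t)^2 * c x"
  using W_eq[of x t] sum_nonzero[of x t] unfolding W_def by (simp add: field_simps)

lemma smooth1_f: "smooth1 I f" and smooth1_g: "smooth1 I g"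
proof -
  have W: "smooth1 I (\<lambda>x. W x y0)" and W_t: "smooth1 I (\<lambda>x. W_t x y0)"
    unfolding W_def W_t_def
    by (intro smooth1_intros smooth1_on_base_line smooth_eta smooth2_py smooth1_c smooth1_e
        smooth1_deriv[OF open_I]; simp)+
  show "smooth1 I f"
    unfolding f_def by (intro smooth1_intros W W_t) (smt (verit) sum_nonzero y0_in_J)
  show "smooth1 I g"
    unfolding g_def by (intro smooth1_intros W W_t) simp
qed

abbreviation "f' \<equiv> deriv f"
abbreviation "f'' \<equiv> deriv f'"
abbreviation "g' \<equiv> deriv g"
abbreviation "g'' \<equiv> deriv g'"

lemmas f_derivatives = smooth1_derivatives[OF smooth1_f]
lemmas g_derivatives = smooth1_derivatives[OF smooth1_g]

lemma py_eta:
  assumes x: "x \<in> I" and t: "t \<in> J"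
  shows "py eta (x, t) = f x - inverse (x + t)^2 * g x + 7 * (x + t) * c x
    + 3/4 * (x + t)^2 * c' x + 8/3 * x * (x + t) * c x"
  by (rule py_eqI[OF t, where h = "\<lambda>s. inverse (x + s) * g x - e x + (x + s) * f x
      + 7/2 * (x + s)^2 * c x + 1/4 * (x + s)^3 * c' x + 4/3 * x * (x + s)^2 * c x"])
    (use sum_nonzero[OF x t] in \<open>auto simp: eta_eq x intro!: derivative_eq_intros
      simp del: power_inverse\<close>,
     simp add: divide_simps power2_eq_square power3_eq_cube del: power_inverse,
     (simp add: algebra_simps)?)

lemma px_eta:
  assumes x: "x \<in> I" and t: "t \<in> J"
  shows "px eta (x, t) = inverse (x + t) * g' x - inverse (x + t)^2 * g x + f x - e' x
    + (x + t) * f' x + 7 * (x + t) * c x + 17/4 * (x + t)^2 * c' x + 4/3 * (x + t)^2 * c x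
    + 1/4 * (x + t)^3 * c'' x + 8/3 * x * (x + t) * c x + 4/3 * x * (x + t)^2 * c' x"
  by (rule px_eqI[OF x, where h = "\<lambda>x. inverse (x + t) * g x - e x + (x + t) * f x
      + 7/2 * (x + t)^2 * c x + 1/4 * (x + t)^3 * c' x + 4/3 * x * (x + t)^2 * c x"])
    (use sum_nonzero[OF x t] in \<open>auto simp: eta_eq t intro!: derivative_eq_intros
      c_derivatives e_derivatives f_derivatives g_derivatives x simp del: power_inverse\<close>,
     simp add: divide_simps power2_eq_square power3_eq_cube del: power_inverse,
     (simp add: algebra_simps)?)

lemma pxpy_eta:
  assumes x: "x \<in> I" and t: "t \<in> J"
  shows "py (px eta) (x, t) = 2 * inverse (x + t)^3 * g x - inverse (x + t)^2 * g' x + f' x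
    + 7 * c x + 17/2 * (x + t) * c' x + 8/3 * (x + t) * c x + 3/4 * (x + t)^2 * c'' x
    + 8/3 * x * c x + 8/3 * x * (x + t) * c' x"
  by (rule py_eqI[OF t, where h = "\<lambda>s. inverse (x + s) * g' x - inverse (x + s)^2 * g x
      + f x - e' x + (x + s) * f' x + 7 * (x + s) * c x + 17/4 * (x + s)^2 * c' x
      + 4/3 * (x + s)^2 * c x + 1/4 * (x + s)^3 * c'' x + 8/3 * x * (x + s) * c x
      + 4/3 * x * (x + s)^2 * c' x"])
    (use sum_nonzero[OF x t] in \<open>auto simp: px_eta x intro!: derivative_eq_intros
      simp del: power_inverse\<close>,
     simp add: divide_simps power2_eq_square power3_eq_cube del: power_inverse,
     (simp add: algebra_simps)?)

lemma pxpx_eta: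
  assumes x: "x \<in> I" and t: "t \<in> J"
  shows "px (px eta) (x, t) = 2 * inverse (x + t)^3 * g x - 2 * inverse (x + t)^2 * g' x
    + inverse (x + t) * g'' x + 2 * f' x - e'' x + 7 * c x + (x + t) * f'' x
    + 31/2 * (x + t) * c' x + 16/3 * (x + t) * c x + 5 * (x + t)^2 * c'' x
    + 8/3 * (x + t)^2 * c' x + 1/4 * (x + t)^3 * c''' x + 8/3 * x * c x
    + 16/3 * x * (x + t) * c' x + 4/3 * x * (x + t)^2 * c'' x"
  by (rule px_eqI[OF x, where h = "\<lambda>x. inverse (x + t) * g' x - inverse (x + t)^2 * g x
      + f x - e' x + (x + t) * f' x + 7 * (x + t) * c x + 17/4 * (x + t)^2 * c' x
      + 4/3 * (x + t)^2 * c x + 1/4 * (x + t)^3 * c'' x + 8/3 * x * (x + t) * c x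
      + 4/3 * x * (x + t)^2 * c' x"])
    (use sum_nonzero[OF x t] in \<open>auto simp: px_eta t intro!: derivative_eq_intros
      c_derivatives e_derivatives f_derivatives g_derivatives x simp del: power_inverse\<close>,
     simp add: divide_simps power2_eq_square power3_eq_cube del: power_inverse,
     (simp add: algebra_simps)?)

text \<open>Substituting xi and eta into the coefficients of y' and of 1 in the determining cubic
  and multiplying by u = x + y gives these polynomials in u.\<close>

definition E1_poly :: "real \<Rightarrow> real poly" where
  "E1_poly x = Poly
    [6*g x + 2*x*g x,
    0,
    6*f x - 6*e' x - 2*e x + 2*x*f x - 2*x*e' x - 18*x*c x - 3*x^2*c x,
    4*f' x - e'' x + 57*c x + 16*x*c x + (8/3)*x^2*c x,
    (45/2)*c' x + 16*c x + (15/2)*x*c' x,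
    (3/2)*c'' x]"

definition E0_poly :: "real \<Rightarrow> real poly" where
  "E0_poly x = Poly
    [6*x*g x + x^2*g x,
    6*g x + 2*x*g x,
    - 6*g' x + 3*g x - 6*e x - 2*x*g' x + 18*x*f x - 12*x*e' x - 2*x*e x + 3*x^2*f x - 2*x^2*e' x,
    g'' x - 16*f x + 16*e' x - 2*e x + 2*x*f x - 2*x*e' x + 78*x*c x + 45*x^2*c x + (16/3)*x^3*c x,
    - 2*f' x - 3*f x - e'' x + 6*e' x - 78*c x - 2*x*f' x + (3/2)*x*c' x - 29*x*c x
      + (1/4)*x^2*c' x + (8/3)*x^2*c x,
    f'' x - (3/2)*c' x - 16*c x - (17/2)*x*c' x - (32/3)*x*c x - (8/3)*x^2*c' x,
    4*c'' x + (41/12)*c' x + (5/6)*x*c'' x,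
    (1/4)*c''' x]"

lemma poly_E1_poly:
  assumes x: "x \<in> I" and t: "t \<in> J"
  shows "poly (E1_poly x) (x + t) = 0"
proof -
  have u: "(x + t) * inverse (x + t) = 1" using sum_nonzero[OF x t] by simp
  have E: "xi (x, t) * ((4 + 2*x) - 2*(x + t)) + (4 + 2*x) * eta (x, t) + 2*(x + t) * px eta (x, t)
      - (x + t)*(4 + 2*x) * px xi (x, t) + (x + t)^2 * (2 * py (px eta) (x, t) - px (px xi) (x, t))
      + 3*(6 + 4*x + 3*t)*t * py xi (x, t) = 0"
    using determining(3)[OF x t] by simp
  show ?thesis
    using E u unfolding E1_poly_def xi_eq[OF x t] px_xi[OF x t] py_xi[OF x t] pxpx_xi[OF x t]
      eta_eq[OF x t] px_eta[OF x t] pxpy_eta[OF x t]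
    by (simp only: Poly.simps poly_pCons poly_0) algebra
qed

lemma poly_E0_poly:
  assumes x: "x \<in> I" and t: "t \<in> J"
  shows "poly (E0_poly x) (x + t) = 0"
proof -
  have u: "(x + t) * inverse (x + t) = 1" using sum_nonzero[OF x t] by simp
  have E: "xi (x, t) * (4*t*(x + t) - 2*(6 + 4*x + 3*t)*t)
      + eta (x, t) * (((6 + 4*x + 3*t) + 3*t)*(x + t) - 2*(6 + 4*x + 3*t)*t)
      - (x + t)^2 * (4 + 2*x) * px eta (x, t) + (x + t)^3 * px (px eta) (x, t)
      - (6 + 4*x + 3*t)*t*(x + t) * py eta (x, t) + 2*(6 + 4*x + 3*t)*t*(x + t) * px xi (x, t) = 0"
    using determining(4)[OF x t] by simp
  show ?thesis
    using E u unfolding E0_poly_def xi_eq[OF x t] px_xi[OF x t]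
      eta_eq[OF x t] px_eta[OF x t] py_eta[OF x t] pxpx_eta[OF x t]
    by (simp only: Poly.simps poly_pCons poly_0) algebra
qed

lemma poly_eq_0_if_vanishes_on_J:
  assumes x: "x \<in> I" and p: "\<And>t. t \<in> J \<Longrightarrow> poly p (x + t) = 0"
  shows "p = 0"
proof (rule poly_eq_0_if_vanishes_on_interval[of "x + y0 - d" "x + y0 + d"])
  show "x + y0 - d < x + y0 + d" using d_pos by simp
  fix s assume "s \<in> {x + y0 - d<..<x + y0 + d}"
  then have "s - x \<in> J" unfolding J_def by auto
  then show "poly p s = 0" using p[of "s - x"] by simp
qed

lemma E1_poly_eq_0: "x \<in> I \<Longrightarrow> E1_poly x = 0"
  using poly_eq_0_if_vanishes_on_J poly_E1_poly by blast

lemma E0_poly_eq_0: "x \<in> I \<Longrightarrow> E0_poly x = 0"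
  using poly_eq_0_if_vanishes_on_J poly_E0_poly by blast

lemma deriv_eq_0_if_vanishes_on_I:
  assumes "\<And>s. s \<in> I \<Longrightarrow> h s = 0" "x \<in> I"
  shows "deriv h x = 0"
proof -
  have "(h has_real_derivative 0) (at x)"
    using has_field_derivative_transform_within_open[OF DERIV_const open_I assms(2)] assms(1) by simp
  then show ?thesis by (rule DERIV_imp_deriv)
qed

lemma c_eq_0: "x \<in> I \<Longrightarrow> c x = 0 \<and> c' x = 0"
  using E1_poly_eq_0[of x] E0_poly_eq_0[of x] unfolding E1_poly_def E0_poly_def by simp

lemma g_eq_0: "x \<in> I \<Longrightarrow> g x = 0"
proof -
  assume x: "x \<in> I"
  have "(x + 3) * g x = 0" "x * (x + 6) * g x = 0"
    using E1_poly_eq_0[OF x] E0_poly_eq_0[OF x] unfolding E1_poly_def E0_poly_def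
    by (simp_all add: algebra_simps power2_eq_square)
  then show "g x = 0" by auto
qed

lemma e_eq_0_and_f_eq_deriv_e: "x \<in> I \<Longrightarrow> e x = 0 \<and> f x = e' x"
proof -
  assume x: "x \<in> I"
  have "g' s = 0" if "s \<in> I" for s
    using deriv_eq_0_if_vanishes_on_I[of g, OF g_eq_0 that] .
  then have "g'' x = 0" using deriv_eq_0_if_vanishes_on_I[of g' x] x by blast
  then have "6*f x - 6*e' x - 2*e x + 2*x*f x - 2*x*e' x = 0"
    "- 16*f x + 16*e' x - 2*e x + 2*x*f x - 2*x*e' x = 0"
    using E1_poly_eq_0[OF x] E0_poly_eq_0[OF x] c_eq_0[OF x] unfolding E1_poly_def E0_poly_def
    by simp_all
  then show ?thesis by (smt (verit))
qed

lemma vanishes_at_centre: "xi (x0, y0) = 0 \<and> eta (x0, y0) = 0"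
proof -
  have "e' x0 = 0" using deriv_eq_0_if_vanishes_on_I e_eq_0_and_f_eq_deriv_e x0_in_I by blast
  then show ?thesis
    using xi_eq[OF x0_in_I y0_in_J] eta_eq[OF x0_in_I y0_in_J]
      c_eq_0[OF x0_in_I] g_eq_0[OF x0_in_I] e_eq_0_and_f_eq_deriv_e[OF x0_in_I] by simp
qed

end

theorem mainTheorem5:
  fixes U :: "(real \<times> real) set" and xi eta :: "real \<times> real \<Rightarrow> real"
  assumes "lie_point_symmetry U xi eta"
  shows "\<forall>z\<in>U. xi z = 0 \<and> eta z = 0"
proof
  fix z assume "z \<in> U"
  obtain x0 y0 where z: "z = (x0, y0)" by fastforce
  have "open U" using assms unfolding lie_point_symmetry_def by blast
  then obtain r where "r > 0" "ball (x0, y0) r \<subseteq> U"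
    using \<open>z \<in> U\<close> z open_contains_ball by blast
  then interpret symmetry_on_box U xi eta x0 y0 "r / 2"
    using assms box_subset_ball[of x0 "r" y0] by unfold_locales auto
  show "xi z = 0 \<and> eta z = 0" using vanishes_at_centre z by simp
qed

end
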